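(* Let $G$ be a topological group, let $G'$ be a separated topological group and let $f_n\colon G\to G'$, $n\in\mathbb{N}$, be a sequence of homomorphisms of topological groups. Then the following are equivalent: (a) the sequence $(f_n)_n$ converges continuously to a homomorphism $f\colon G\to G'$; (b) there exists a homomorphism of topological groups $f\colon G\to G'$ such that the sequence $(f_n-f)_n$ converges continuously to the zero homomorphism; (c) the sequence $(f_n)_n$ converges pointwise to a homomorphism of topological groups $f\colon G\to G'$, and for every open subgroup $H'$ of $G'$ there exist an open subgroup $H$ of $G$ and an integer $n_0\ge0$ such that $(f_n-f)(H)\subseteq H'$ for every $n\ge n_0$. In particular, if a sequence of homomorphisms of topological groups $(f_n)_n$ converges continuously to a homomorphism $f\colon G\to G'$, then $f$ is continuous.
   Context: Topological groups are abelian groups with a linear topology admitting a countable fundamental system of neighbourhoods of $0$ consisting of open subgroups; a homomorphism of topological groups is a continuous group homomorphism; separated means Hausdorff. For group homomorphisms $f_n,f\colon G\to G'$: $(f_n)$ converges pointwise to $f$ if for every $g\in G$ and open subgroup $H'$ of $G'$ there is $n_0$ with $f_n(g)-f(g)\in H'$ for $n\ge n_0$; $(f_n)$ converges continuously to $f$ if every $f_n$ is continuous and for every $g\in G$ and open subgroup $H'$ of $G'$ there exist an open subgroup $H$ of $G$ and $n_0$ such that $f_n(g+x)-f(g+x)\in H'$ for all $x\in H$ and all $n\ge n_0$. *)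

theory Defs
  imports "HOL-Analysis.Analysis"
begin

definition add_subgroup :: "'a::ab_group_add set \<Rightarrow> bool" where
  "add_subgroup H \<longleftrightarrow> 0 \<in> H \<and> (\<forall>x\<in>H. \<forall>y\<in>H. x - y \<in> H)"

definition open_subgroup :: "'a::ab_group_add topology \<Rightarrow> 'a set \<Rightarrow> bool" where
  "open_subgroup T H \<longleftrightarrow> add_subgroup H \<and> openin T H"

text \<open>A topological group in the sense of the paper: an abelian group (the whole type)
  with a linear topology, i.e. a translation invariant topology having a countable
  fundamental system of neighbourhoods of 0 consisting of open subgroups.\<close>
definition lin_top_group :: "'a::ab_group_add topology \<Rightarrow> bool" where
  "lin_top_group T \<longleftrightarrow> topspace T = UNIV \<and>
     (\<forall>U a. openin T U \<longrightarrow> openin T ((\<lambda>x. a + x) ` U)) \<and>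
     (\<exists>B :: nat \<Rightarrow> 'a set. (\<forall>n. open_subgroup T (B n)) \<and>
        (\<forall>U. openin T U \<and> 0 \<in> U \<longrightarrow> (\<exists>n. B n \<subseteq> U)))"

definition grp_hom :: "('a::ab_group_add \<Rightarrow> 'b::ab_group_add) \<Rightarrow> bool" where
  "grp_hom f \<longleftrightarrow> (\<forall>x y. f (x + y) = f x + f y)"

definition top_grp_hom :: "'a::ab_group_add topology \<Rightarrow> 'b::ab_group_add topology \<Rightarrow> ('a \<Rightarrow> 'b) \<Rightarrow> bool" where
  "top_grp_hom T T' f \<longleftrightarrow> grp_hom f \<and> continuous_map T T' f"

definition conv_pointwise :: "'b::ab_group_add topology \<Rightarrow> (nat \<Rightarrow> 'a \<Rightarrow> 'b) \<Rightarrow> ('a \<Rightarrow> 'b) \<Rightarrow> bool" where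
  "conv_pointwise T' fs f \<longleftrightarrow>
     (\<forall>g H'. open_subgroup T' H' \<longrightarrow> (\<exists>n0. \<forall>n\<ge>n0. fs n g - f g \<in> H'))"

definition conv_continuous :: "'a::ab_group_add topology \<Rightarrow> 'b::ab_group_add topology \<Rightarrow>
    (nat \<Rightarrow> 'a \<Rightarrow> 'b) \<Rightarrow> ('a \<Rightarrow> 'b) \<Rightarrow> bool" where
  "conv_continuous T T' fs f \<longleftrightarrow> (\<forall>n. continuous_map T T' (fs n)) \<and>
     (\<forall>g H'. open_subgroup T' H' \<longrightarrow>
        (\<exists>H n0. open_subgroup T H \<and> (\<forall>x\<in>H. \<forall>n\<ge>n0. fs n (g + x) - f (g + x) \<in> H')))"

end

theory Submission
  imports Defs
begin

text \<open>A homomorphism between linearly topologised groups is continuous iff it maps some open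
  subgroup into any given open subgroup, because the cosets of open subgroups form a base of
  the topology. Continuous convergence to \<open>f\<close> therefore makes \<open>f\<close> continuous: on an open subgroup,
  \<open>f\<close> differs from the continuous \<open>f\<^sub>n\<^sub>0\<close> by values in \<open>H'\<close>. Subtracting the continuous limit
  reduces everything to convergence to \<open>0\<close>, and for homomorphisms \<open>h\<^sub>n\<close> continuous convergence
  to \<open>0\<close> at \<open>g + x\<close> splits, via \<open>h\<^sub>n (g + x) = h\<^sub>n g + h\<^sub>n x\<close>, into pointwise convergence at \<open>g\<close> and
  eventual smallness on a whole open subgroup.\<close>

lemma add_subgroup_0: "add_subgroup H \<Longrightarrow> 0 \<in> H"
  unfolding add_subgroup_def by blast

lemma add_subgroup_diff: "add_subgroup H \<Longrightarrow> x \<in> H \<Longrightarrow> y \<in> H \<Longrightarrow> x - y \<in> H"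
  unfolding add_subgroup_def by blast

lemma add_subgroup_add: "add_subgroup H \<Longrightarrow> x \<in> H \<Longrightarrow> y \<in> H \<Longrightarrow> x + y \<in> H"
  unfolding add_subgroup_def by (metis diff_0 diff_minus_eq_add)

lemma open_subgroup_0: "open_subgroup T H \<Longrightarrow> 0 \<in> H"
  unfolding open_subgroup_def by (simp add: add_subgroup_0)

lemma open_subgroup_Int:
  "open_subgroup T H1 \<Longrightarrow> open_subgroup T H2 \<Longrightarrow> open_subgroup T (H1 \<inter> H2)"
  unfolding open_subgroup_def add_subgroup_def by auto

lemma grp_hom_0: "grp_hom h \<Longrightarrow> h 0 = 0"
  unfolding grp_hom_def by (metis add.right_neutral add_left_cancel)

lemma grp_hom_diff: "grp_hom f \<Longrightarrow> grp_hom g \<Longrightarrow> grp_hom (\<lambda>x. f x - g x)"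
  unfolding grp_hom_def by (simp add: algebra_simps)

lemma lin_top_group_topspace: "lin_top_group T \<Longrightarrow> topspace T = UNIV"
  unfolding lin_top_group_def by (elim conjE)

lemma lin_top_group_translate:
  "lin_top_group T \<Longrightarrow> openin T U \<Longrightarrow> openin T ((\<lambda>x. a + x) ` U)"
  unfolding lin_top_group_def by (elim conjE) simp

lemma lin_top_group_nhds_0:
  assumes "lin_top_group T" "openin T U" "0 \<in> U"
  obtains H where "open_subgroup T H" "H \<subseteq> U"
proof -
  obtain B :: "nat \<Rightarrow> 'a set" where "\<And>n. open_subgroup T (B n)"
    and "\<And>U. openin T U \<Longrightarrow> 0 \<in> U \<Longrightarrow> \<exists>n. B n \<subseteq> U"
    using assms(1) unfolding lin_top_group_def by (elim conjE exE) blast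
  then show ?thesis
    using that assms(2,3) by blast
qed

lemma openin_lin_top_group_iff:
  assumes T: "lin_top_group T"
  shows "openin T U \<longleftrightarrow> (\<forall>x\<in>U. \<exists>H. open_subgroup T H \<and> (\<lambda>y. x + y) ` H \<subseteq> U)"
proof
  assume U: "openin T U"
  show "\<forall>x\<in>U. \<exists>H. open_subgroup T H \<and> (\<lambda>y. x + y) ` H \<subseteq> U"
  proof
    fix x assume "x \<in> U"
    then have "0 \<in> (\<lambda>y. - x + y) ` U"
      by (auto intro!: image_eqI[where x = x])
    then obtain H where "open_subgroup T H" "H \<subseteq> (\<lambda>y. - x + y) ` U"
      using lin_top_group_nhds_0[OF T lin_top_group_translate[OF T U]] by metis
    then show "\<exists>H. open_subgroup T H \<and> (\<lambda>y. x + y) ` H \<subseteq> U"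
      by force
  qed
next
  assume cosets: "\<forall>x\<in>U. \<exists>H. open_subgroup T H \<and> (\<lambda>y. x + y) ` H \<subseteq> U"
  show "openin T U"
  proof (subst openin_subopen, intro ballI)
    fix x assume "x \<in> U"
    then obtain H where H: "open_subgroup T H" "(\<lambda>y. x + y) ` H \<subseteq> U"
      using cosets by blast
    have "openin T ((\<lambda>y. x + y) ` H)"
      using H(1) lin_top_group_translate[OF T] unfolding open_subgroup_def by blast
    moreover have "x \<in> (\<lambda>y. x + y) ` H"
      using open_subgroup_0[OF H(1)] by (auto intro!: image_eqI[where x = 0])
    ultimately show "\<exists>W. openin T W \<and> x \<in> W \<and> W \<subseteq> U"
      using H(2) by blast
  qed
qed

lemma continuous_map_grp_hom_iff:
  assumes T: "lin_top_group T" and T': "lin_top_group T'" and h: "grp_hom h"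
  shows "continuous_map T T' h \<longleftrightarrow>
    (\<forall>H'. open_subgroup T' H' \<longrightarrow> (\<exists>H. open_subgroup T H \<and> h ` H \<subseteq> H'))"
proof -
  have "continuous_map T T' h \<longleftrightarrow> (\<forall>U. openin T' U \<longrightarrow> openin T {x. h x \<in> U})"
    by (simp add: continuous_map lin_top_group_topspace[OF T] lin_top_group_topspace[OF T'])
  also have "\<dots> \<longleftrightarrow>
    (\<forall>H'. open_subgroup T' H' \<longrightarrow> (\<exists>H. open_subgroup T H \<and> h ` H \<subseteq> H'))"
  proof (intro iffI allI impI)
    fix H' assume cont: "\<forall>U. openin T' U \<longrightarrow> openin T {x. h x \<in> U}"
      and H': "open_subgroup T' H'"
    have "openin T {x. h x \<in> H'}"
      using cont H' unfolding open_subgroup_def by blast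
    moreover have "0 \<in> {x. h x \<in> H'}"
      using grp_hom_0[OF h] open_subgroup_0[OF H'] by simp
    ultimately obtain H where "open_subgroup T H" "H \<subseteq> {x. h x \<in> H'}"
      by (rule lin_top_group_nhds_0[OF T])
    then show "\<exists>H. open_subgroup T H \<and> h ` H \<subseteq> H'"
      by blast
  next
    fix U assume small: "\<forall>H'. open_subgroup T' H' \<longrightarrow> (\<exists>H. open_subgroup T H \<and> h ` H \<subseteq> H')"
      and U: "openin T' U"
    show "openin T {x. h x \<in> U}"
      unfolding openin_lin_top_group_iff[OF T]
    proof
      fix x assume "x \<in> {x. h x \<in> U}"
      then obtain H' where H': "open_subgroup T' H'" "(\<lambda>y. h x + y) ` H' \<subseteq> U"
        using U unfolding openin_lin_top_group_iff[OF T'] by blast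
      obtain H where H: "open_subgroup T H" "h ` H \<subseteq> H'"
        using small H'(1) by blast
      have "(\<lambda>y. x + y) ` H \<subseteq> {x. h x \<in> U}"
      proof clarify
        fix y assume "y \<in> H"
        then have "h x + h y \<in> U"
          using H(2) H'(2) by blast
        then show "h (x + y) \<in> U"
          using h unfolding grp_hom_def by simp
      qed
      then show "\<exists>H. open_subgroup T H \<and> (\<lambda>y. x + y) ` H \<subseteq> {x. h x \<in> U}"
        using H(1) by blast
    qed
  qed
  finally show ?thesis .
qed

lemma top_grp_hom_diff:
  assumes T: "lin_top_group T" and T': "lin_top_group T'"
    and f: "top_grp_hom T T' f" and g: "top_grp_hom T T' g"
  shows "top_grp_hom T T' (\<lambda>x. f x - g x)"
proof -
  have hom: "grp_hom f" "grp_hom g" "grp_hom (\<lambda>x. f x - g x)"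
    using f g grp_hom_diff unfolding top_grp_hom_def by blast+
  have f_small: "\<forall>H'. open_subgroup T' H' \<longrightarrow> (\<exists>H. open_subgroup T H \<and> f ` H \<subseteq> H')"
    using f continuous_map_grp_hom_iff[OF T T' hom(1)] unfolding top_grp_hom_def by blast
  have g_small: "\<forall>H'. open_subgroup T' H' \<longrightarrow> (\<exists>H. open_subgroup T H \<and> g ` H \<subseteq> H')"
    using g continuous_map_grp_hom_iff[OF T T' hom(2)] unfolding top_grp_hom_def by blast
  have "\<exists>H. open_subgroup T H \<and> (\<lambda>x. f x - g x) ` H \<subseteq> H'" if H': "open_subgroup T' H'" for H'
  proof -
    obtain H1 where H1: "open_subgroup T H1" "f ` H1 \<subseteq> H'"
      using f_small H' by blast
    obtain H2 where H2: "open_subgroup T H2" "g ` H2 \<subseteq> H'"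
      using g_small H' by blast
    have "add_subgroup H'"
      using H' unfolding open_subgroup_def by blast
    then have "(\<lambda>x. f x - g x) ` (H1 \<inter> H2) \<subseteq> H'"
      using H1(2) H2(2) add_subgroup_diff by blast
    then show ?thesis
      using open_subgroup_Int[OF H1(1) H2(1)] by blast
  qed
  then show ?thesis
    using continuous_map_grp_hom_iff[OF T T' hom(3)] hom(3) unfolding top_grp_hom_def by blast
qed

lemma continuous_map_conv_continuous_limit:
  assumes T: "lin_top_group T" and T': "lin_top_group T'"
    and fs: "\<forall>n. top_grp_hom T T' (fs n)"
    and f: "grp_hom f" and conv: "conv_continuous T T' fs f"
  shows "continuous_map T T' f"
  unfolding continuous_map_grp_hom_iff[OF T T' f]
proof (intro allI impI)
  fix H' assume H': "open_subgroup T' H'"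
  obtain H n0 where H: "open_subgroup T H" "\<forall>x\<in>H. \<forall>n\<ge>n0. fs n (0 + x) - f (0 + x) \<in> H'"
    using conv H' unfolding conv_continuous_def by blast
  have "grp_hom (fs n0)" "continuous_map T T' (fs n0)"
    using fs unfolding top_grp_hom_def by blast+
  then obtain H1 where H1: "open_subgroup T H1" "fs n0 ` H1 \<subseteq> H'"
    using H' continuous_map_grp_hom_iff[OF T T'] by blast
  have "f x \<in> H'" if x: "x \<in> H \<inter> H1" for x
  proof -
    have "fs n0 x \<in> H'" "fs n0 x - f x \<in> H'"
      using H H1(2) x by auto
    then have "fs n0 x - (fs n0 x - f x) \<in> H'"
      using H' add_subgroup_diff unfolding open_subgroup_def by blast
    then show ?thesis by simp
  qed
  then show "\<exists>H. open_subgroup T H \<and> f ` H \<subseteq> H'"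
    using open_subgroup_Int[OF H(1) H1(1)] by blast
qed

lemma conv_continuous_diff_limit_iff:
  assumes T: "lin_top_group T" and T': "lin_top_group T'"
    and fs: "\<forall>n. top_grp_hom T T' (fs n)" and f: "top_grp_hom T T' f"
  shows "conv_continuous T T' fs f \<longleftrightarrow> conv_continuous T T' (\<lambda>n x. fs n x - f x) (\<lambda>x. 0)"
  using top_grp_hom_diff[OF T T' fs[rule_format] f] fs
  unfolding conv_continuous_def top_grp_hom_def by simp

lemma conv_continuous_0_iff:
  assumes fs: "\<forall>n. top_grp_hom T T' (fs n)"
  shows "conv_continuous T T' fs (\<lambda>x. 0) \<longleftrightarrow> conv_pointwise T' fs (\<lambda>x. 0) \<and>
    (\<forall>H'. open_subgroup T' H' \<longrightarrow> (\<exists>H n0. open_subgroup T H \<and> (\<forall>n\<ge>n0. fs n ` H \<subseteq> H')))"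
proof
  assume conv: "conv_continuous T T' fs (\<lambda>x. 0)"
  have "conv_pointwise T' fs (\<lambda>x. 0)"
    unfolding conv_pointwise_def
  proof (intro allI impI)
    fix g H' assume "open_subgroup T' H'"
    then obtain H n0 where "open_subgroup T H" "\<forall>x\<in>H. \<forall>n\<ge>n0. fs n (g + x) - 0 \<in> H'"
      using conv unfolding conv_continuous_def by blast
    then show "\<exists>n0. \<forall>n\<ge>n0. fs n g - 0 \<in> H'"
      using open_subgroup_0 by fastforce
  qed
  moreover have "\<exists>H n0. open_subgroup T H \<and> (\<forall>n\<ge>n0. fs n ` H \<subseteq> H')"
    if H': "open_subgroup T' H'" for H'
  proof -
    obtain H n0 where "open_subgroup T H" "\<forall>x\<in>H. \<forall>n\<ge>n0. fs n (0 + x) - 0 \<in> H'"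
      using conv H' unfolding conv_continuous_def by blast
    then show ?thesis
      by auto
  qed
  ultimately show "conv_pointwise T' fs (\<lambda>x. 0) \<and>
    (\<forall>H'. open_subgroup T' H' \<longrightarrow> (\<exists>H n0. open_subgroup T H \<and> (\<forall>n\<ge>n0. fs n ` H \<subseteq> H')))"
    by blast
next
  assume "conv_pointwise T' fs (\<lambda>x. 0) \<and>
    (\<forall>H'. open_subgroup T' H' \<longrightarrow> (\<exists>H n0. open_subgroup T H \<and> (\<forall>n\<ge>n0. fs n ` H \<subseteq> H')))"
  then have pw: "conv_pointwise T' fs (\<lambda>x. 0)"
    and small: "\<forall>H'. open_subgroup T' H' \<longrightarrow> (\<exists>H n0. open_subgroup T H \<and> (\<forall>n\<ge>n0. fs n ` H \<subseteq> H'))"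
    by blast+
  have "\<exists>H n0. open_subgroup T H \<and> (\<forall>x\<in>H. \<forall>n\<ge>n0. fs n (g + x) - 0 \<in> H')"
    if H': "open_subgroup T' H'" for g H'
  proof -
    obtain n1 where n1: "\<forall>n\<ge>n1. fs n g - 0 \<in> H'"
      using pw H' unfolding conv_pointwise_def by blast
    obtain H n2 where H: "open_subgroup T H" "\<forall>n\<ge>n2. fs n ` H \<subseteq> H'"
      using small H' by blast
    have "fs n (g + x) \<in> H'" if "x \<in> H" "max n1 n2 \<le> n" for x n
    proof -
      have "fs n (g + x) = fs n g + fs n x"
        using fs unfolding top_grp_hom_def grp_hom_def by blast
      then show ?thesis
        using n1 H that H' add_subgroup_add unfolding open_subgroup_def by fastforce
    qed
    then show ?thesis
      using H(1) by (intro exI[where x = H] exI[where x = "max n1 n2"]) auto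
  qed
  then show "conv_continuous T T' fs (\<lambda>x. 0)"
    using fs unfolding conv_continuous_def top_grp_hom_def by blast
qed

lemma conv_continuous_diff_0_iff:
  assumes T: "lin_top_group T" and T': "lin_top_group T'"
    and fs: "\<forall>n. top_grp_hom T T' (fs n)" and f: "top_grp_hom T T' f"
  shows "conv_continuous T T' (\<lambda>n x. fs n x - f x) (\<lambda>x. 0) \<longleftrightarrow>
    conv_pointwise T' fs f \<and> (\<forall>H'. open_subgroup T' H' \<longrightarrow>
      (\<exists>H n0. open_subgroup T H \<and> (\<forall>n\<ge>n0. (\<lambda>x. fs n x - f x) ` H \<subseteq> H')))"
proof -
  have "\<forall>n. top_grp_hom T T' (\<lambda>x. fs n x - f x)"
    using top_grp_hom_diff[OF T T' fs[rule_format] f] by blast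
  moreover have "conv_pointwise T' (\<lambda>n x. fs n x - f x) (\<lambda>x. 0) \<longleftrightarrow> conv_pointwise T' fs f"
    unfolding conv_pointwise_def by simp
  ultimately show ?thesis
    using conv_continuous_0_iff[of T T' "\<lambda>n x. fs n x - f x"] by simp
qed

theorem lemma1p9:
  fixes T :: "'a::ab_group_add topology" and T' :: "'b::ab_group_add topology"
    and fs :: "nat \<Rightarrow> 'a \<Rightarrow> 'b"
  assumes "lin_top_group T" and "lin_top_group T'" and "Hausdorff_space T'"
    and "\<forall>n. top_grp_hom T T' (fs n)"
  shows "((\<exists>f. grp_hom f \<and> conv_continuous T T' fs f)
          \<longleftrightarrow> (\<exists>f. top_grp_hom T T' f \<and>
                 conv_continuous T T' (\<lambda>n x. fs n x - f x) (\<lambda>x. 0)))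
       \<and> ((\<exists>f. top_grp_hom T T' f \<and>
                 conv_continuous T T' (\<lambda>n x. fs n x - f x) (\<lambda>x. 0))
          \<longleftrightarrow> (\<exists>f. top_grp_hom T T' f \<and> conv_pointwise T' fs f \<and>
                 (\<forall>H'. open_subgroup T' H' \<longrightarrow>
                    (\<exists>H n0. open_subgroup T H \<and>
                       (\<forall>n\<ge>n0. (\<lambda>x. fs n x - f x) ` H \<subseteq> H')))))
       \<and> (\<forall>f. grp_hom f \<and> conv_continuous T T' fs f \<longrightarrow> continuous_map T T' f)"
proof -
  note T = assms(1) and T' = assms(2) and fs = assms(4)
  have limit_continuous: "\<forall>f. grp_hom f \<and> conv_continuous T T' fs f \<longrightarrow> continuous_map T T' f"
    using continuous_map_conv_continuous_limit[OF T T' fs] by blast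
  have "(\<exists>f. grp_hom f \<and> conv_continuous T T' fs f) \<longleftrightarrow>
      (\<exists>f. top_grp_hom T T' f \<and> conv_continuous T T' fs f)"
    using limit_continuous unfolding top_grp_hom_def by blast
  also have "\<dots> \<longleftrightarrow>
      (\<exists>f. top_grp_hom T T' f \<and> conv_continuous T T' (\<lambda>n x. fs n x - f x) (\<lambda>x. 0))"
    by (rule ex_cong1, rule conj_cong[OF refl conv_continuous_diff_limit_iff[OF T T' fs]])
  finally have a_iff_b: "(\<exists>f. grp_hom f \<and> conv_continuous T T' fs f) \<longleftrightarrow>
      (\<exists>f. top_grp_hom T T' f \<and> conv_continuous T T' (\<lambda>n x. fs n x - f x) (\<lambda>x. 0))" .
  have b_iff_c: "(\<exists>f. top_grp_hom T T' f \<and>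
        conv_continuous T T' (\<lambda>n x. fs n x - f x) (\<lambda>x. 0)) \<longleftrightarrow>
      (\<exists>f. top_grp_hom T T' f \<and> conv_pointwise T' fs f \<and> (\<forall>H'. open_subgroup T' H' \<longrightarrow>
        (\<exists>H n0. open_subgroup T H \<and> (\<forall>n\<ge>n0. (\<lambda>x. fs n x - f x) ` H \<subseteq> H'))))"
    by (rule ex_cong1, rule conj_cong[OF refl conv_continuous_diff_0_iff[OF T T' fs]])
  show ?thesis
    using a_iff_b b_iff_c limit_continuous by (intro conjI)
qed

end
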